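(* Every Abel sequentially compact subset of $\mathbb{R}$ is slowly oscillating compact.
   Context: A sequence $(p_n)_{n\ge0}$ is Abel convergent to $\ell$ if $\sum_{k=0}^{\infty}p_k x^k$ converges for every $0\le x<1$ and $\lim_{x\to 1^-}(1-x)\sum_{k=0}^{\infty}p_k x^k=\ell$. A subset $F\subseteq\mathbb{R}$ is Abel sequentially compact if every sequence of points of $F$ has a subsequence Abel convergent to a limit belonging to $F$. A sequence $(p_n)$ is slowly oscillating if for every $\varepsilon>0$ there exist $\delta>0$ and $N$ such that $|p_m-p_n|<\varepsilon$ whenever $n\ge N$ and $n\le m\le(1+\delta)n$. A subset $E\subseteq\mathbb{R}$ is slowly oscillating compact if every sequence of points of $E$ has a slowly oscillating subsequence. *)

theory Defs
  imports "HOL-Analysis.Analysis"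
begin

definition abel_convergent :: "(nat \<Rightarrow> real) \<Rightarrow> real \<Rightarrow> bool" where
  "abel_convergent p l \<longleftrightarrow>
     (\<forall>x::real. 0 \<le> x \<and> x < 1 \<longrightarrow> summable (\<lambda>k. p k * x ^ k)) \<and>
     ((\<lambda>x::real. (1 - x) * (\<Sum>k. p k * x ^ k)) \<longlongrightarrow> l) (at_left 1)"

definition abel_seq_compact :: "real set \<Rightarrow> bool" where
  "abel_seq_compact F \<longleftrightarrow>
     (\<forall>p. (\<forall>n. p n \<in> F) \<longrightarrow>
        (\<exists>(r::nat \<Rightarrow> nat) l. strict_mono r \<and> l \<in> F \<and> abel_convergent (p \<circ> r) l))"

definition slowly_oscillating :: "(nat \<Rightarrow> real) \<Rightarrow> bool" where
  "slowly_oscillating p \<longleftrightarrow>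
     (\<forall>\<epsilon>>0. \<exists>\<delta>>0. \<exists>N. \<forall>n m. N \<le> n \<and> n \<le> m \<and> real m \<le> (1 + \<delta>) * real n
        \<longrightarrow> \<bar>p m - p n\<bar> < \<epsilon>)"

definition slowly_oscillating_compact :: "real set \<Rightarrow> bool" where
  "slowly_oscillating_compact E \<longleftrightarrow>
     (\<forall>p. (\<forall>n. p n \<in> E) \<longrightarrow>
        (\<exists>r::nat \<Rightarrow> nat. strict_mono r \<and> slowly_oscillating (p \<circ> r)))"

end

theory Submission
  imports Defs
begin

text \<open>An Abel sequentially compact set is bounded: otherwise pick points with
  \<open>\<bar>p n\<bar> \<ge> 2^n\<close>; every subsequence still grows like \<open>2^k\<close>, so its power series
  diverges at \<open>x = 1/2\<close>. By Bolzano--Weierstrass every sequence in a bounded set has a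
  convergent, hence slowly oscillating, subsequence.\<close>

lemma abel_convergent_imp_terms_tendsto_zero:
  assumes "abel_convergent p l" and "0 \<le> x" and "x < 1"
  shows "(\<lambda>k. p k * x ^ k) \<longlonglongrightarrow> 0"
  using assms summable_LIMSEQ_zero unfolding abel_convergent_def by blast

lemma abel_seq_compact_imp_bounded:
  assumes "abel_seq_compact F"
  shows "bounded F"
proof (rule ccontr)
  assume "\<not> bounded F"
  then have "\<forall>n. \<exists>y\<in>F. (2::real) ^ n \<le> \<bar>y\<bar>"
    by (meson bounded_real linear)
  then obtain p where pF: "\<And>n. p n \<in> F" and p_large: "\<And>n. (2::real) ^ n \<le> \<bar>p n\<bar>"
    by metis
  from assms pF obtain r l where r: "strict_mono r" and abel: "abel_convergent (p \<circ> r) l"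
    unfolding abel_seq_compact_def by blast
  from abel have "(\<lambda>k. (p \<circ> r) k * (1/2) ^ k) \<longlonglongrightarrow> 0"
    by (rule abel_convergent_imp_terms_tendsto_zero) simp_all
  then obtain N where N: "\<And>k. k \<ge> N \<Longrightarrow> \<bar>p (r k) * (1/2) ^ k\<bar> < 1"
    by (fastforce simp: o_def dest!: LIMSEQ_D[of _ 0 1])
  have "(2::real) ^ N \<le> 2 ^ r N"
    using r by (simp add: strict_mono_imp_increasing)
  also have "\<dots> \<le> \<bar>p (r N)\<bar>" by (rule p_large)
  finally have "1 \<le> \<bar>p (r N) * (1/2) ^ N\<bar>"
    by (simp add: abs_mult power_one_over)
  with N[of N] show False by simp
qed

lemma convergent_imp_slowly_oscillating:
  assumes "convergent q"
  shows "slowly_oscillating q"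
  unfolding slowly_oscillating_def
proof (intro allI impI)
  fix \<epsilon> :: real assume "\<epsilon> > 0"
  moreover from assms have "Cauchy q" by (simp add: convergent_Cauchy)
  ultimately obtain N where N: "\<And>m n. m \<ge> N \<Longrightarrow> n \<ge> N \<Longrightarrow> \<bar>q m - q n\<bar> < \<epsilon>"
    unfolding Cauchy_def dist_real_def by blast
  show "\<exists>\<delta>>0. \<exists>N. \<forall>n m. N \<le> n \<and> n \<le> m \<and> real m \<le> (1 + \<delta>) * real n
          \<longrightarrow> \<bar>q m - q n\<bar> < \<epsilon>"
    using N by (intro exI[of _ 1] conjI exI[of _ N]) auto
qed

lemma bounded_imp_slowly_oscillating_compact:
  assumes "bounded F"
  shows "slowly_oscillating_compact F"
  unfolding slowly_oscillating_compact_def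
proof (intro allI impI)
  fix p :: "nat \<Rightarrow> real" assume "\<forall>n. p n \<in> F"
  with assms have "bounded (range p)" by (meson bounded_subset image_subsetI)
  then obtain l r where "strict_mono r" "(p \<circ> r) \<longlonglongrightarrow> l"
    using bounded_imp_convergent_subsequence by blast
  then show "\<exists>r. strict_mono r \<and> slowly_oscillating (p \<circ> r)"
    using convergent_imp_slowly_oscillating convergentI by blast
qed

theorem corollary17:
  fixes F :: "real set"
  assumes "abel_seq_compact F"
  shows "slowly_oscillating_compact F"
  using assms abel_seq_compact_imp_bounded bounded_imp_slowly_oscillating_compact by blast

end
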